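(* In the converse setting below, \[ \sum_{i=1}^n H(X_i\mid Y_1^{i-1}Y_2^{i-1}S^{i-1}W_1)\ \ge\ \frac{1-\delta_2}{(1-\delta_1)\delta_2}\sum_{i=1}^n I(X_i;Y_1^{i-1}\mid Y_2^{i-1}S^{i-1}W_1). \]
   Context: Converse setting. $0<\delta_1,\delta_2<1$. Messages $W_1$ uniform on $\mathbb{F}_q^{LN_1}$ and $W_2$ uniform on $\mathbb{F}_q^{LN_2}$, and Alice's private randomness $\Theta_A$, are mutually independent. Channel states $S_1,\dots,S_n\in\{B,C,BC,\emptyset\}$ are i.i.d., independent of $(W_1,W_2,\Theta_A)$, with Bob receiving with probability $1-\delta_1$ and Calvin with probability $1-\delta_2$, independently. Inputs $X_i=f_i(W_1,W_2,\Theta_A,S^{i-1})\in\mathbb{F}_q^L$ (honest acknowledgments). Outputs: $Y_{1,i}=X_i$ if Bob receives packet $i$, else $\perp$; $Y_{2,i}=X_i$ if Calvin receives packet $i$, else $\perp$. $V^i=(V_1,\dots,V_i)$ ($V^0$ empty). *)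

theory Defs
  imports "HOL-Probability.Probability"
begin

definition dentropy :: "'o pmf \<Rightarrow> ('o \<Rightarrow> 'x) \<Rightarrow> real" where
  "dentropy M X = - (\<Sum>x\<in>set_pmf (map_pmf X M).
       pmf (map_pmf X M) x * log 2 (pmf (map_pmf X M) x))"

definition cond_dentropy :: "'o pmf \<Rightarrow> ('o \<Rightarrow> 'x) \<Rightarrow> ('o \<Rightarrow> 'z) \<Rightarrow> real" where
  "cond_dentropy M X Z = - (\<Sum>xz\<in>set_pmf (map_pmf (\<lambda>w. (X w, Z w)) M).
       pmf (map_pmf (\<lambda>w. (X w, Z w)) M) xz *
       log 2 (pmf (map_pmf (\<lambda>w. (X w, Z w)) M) xz / pmf (map_pmf Z M) (snd xz)))"

definition cond_dmi :: "'o pmf \<Rightarrow> ('o \<Rightarrow> 'x) \<Rightarrow> ('o \<Rightarrow> 'y) \<Rightarrow> ('o \<Rightarrow> 'z) \<Rightarrow> real" where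
  "cond_dmi M X Y Z = cond_dentropy M X Z - cond_dentropy M X (\<lambda>w. (Y w, Z w))"

text \<open>Channel states: only Bob receives, only Calvin receives, both, neither.\<close>
datatype chstate = StB | StC | StBC | StNone

fun bob_rec :: "chstate \<Rightarrow> bool" where
  "bob_rec StB = True" | "bob_rec StBC = True" | "bob_rec StC = False" | "bob_rec StNone = False"

fun calvin_rec :: "chstate \<Rightarrow> bool" where
  "calvin_rec StC = True" | "calvin_rec StBC = True" | "calvin_rec StB = False" | "calvin_rec StNone = False"

definition mk_state :: "bool \<Rightarrow> bool \<Rightarrow> chstate" where
  "mk_state b c = (if b then (if c then StBC else StB) else (if c then StC else StNone))"

definition state_pmf :: "real \<Rightarrow> real \<Rightarrow> chstate pmf" where
  "state_pmf d1 d2 = map_pmf (\<lambda>(b, c). mk_state b c)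
      (pair_pmf (bernoulli_pmf (1 - d1)) (bernoulli_pmf (1 - d2)))"

text \<open>Vectors in F_q^m are lists of length m over the finite field 'a.\<close>
definition converse_space ::
  "nat \<Rightarrow> nat \<Rightarrow> nat \<Rightarrow> 'r pmf \<Rightarrow> nat \<Rightarrow> real \<Rightarrow> real
     \<Rightarrow> ('a::{finite,field} list \<times> 'a list \<times> 'r \<times> chstate list) pmf" where
  "converse_space L N1 N2 th n d1 d2 = do {
      w1 \<leftarrow> pmf_of_set {w :: 'a list. length w = L * N1};
      w2 \<leftarrow> pmf_of_set {w :: 'a list. length w = L * N2};
      t \<leftarrow> th;
      s \<leftarrow> replicate_pmf n (state_pmf d1 d2);
      return_pmf (w1, w2, t, s) }"

text \<open>Random variables on the outcome (w1, w2, t, s); indices are 1-based, S_j = s ! (j-1).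
  Encoder: X_i = f i W1 W2 Theta_A S^{i-1}.\<close>
definition Xv :: "(nat \<Rightarrow> 'a list \<Rightarrow> 'a list \<Rightarrow> 'r \<Rightarrow> chstate list \<Rightarrow> 'a list) \<Rightarrow> nat
     \<Rightarrow> 'a list \<times> 'a list \<times> 'r \<times> chstate list \<Rightarrow> 'a list" where
  "Xv f i \<omega> = (case \<omega> of (w1, w2, t, s) \<Rightarrow> f i w1 w2 t (take (i - 1) s))"

text \<open>Y_1^k = (Y_{1,1},...,Y_{1,k}); None plays the role of the erasure symbol.\<close>
definition Y1hist :: "(nat \<Rightarrow> 'a list \<Rightarrow> 'a list \<Rightarrow> 'r \<Rightarrow> chstate list \<Rightarrow> 'a list) \<Rightarrow> nat
     \<Rightarrow> 'a list \<times> 'a list \<times> 'r \<times> chstate list \<Rightarrow> 'a list option list" where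
  "Y1hist f k \<omega> = map (\<lambda>j. if bob_rec (snd (snd (snd \<omega>)) ! (j - 1)) then Some (Xv f j \<omega>) else None)
      [1..<Suc k]"

definition Y2hist :: "(nat \<Rightarrow> 'a list \<Rightarrow> 'a list \<Rightarrow> 'r \<Rightarrow> chstate list \<Rightarrow> 'a list) \<Rightarrow> nat
     \<Rightarrow> 'a list \<times> 'a list \<times> 'r \<times> chstate list \<Rightarrow> 'a list option list" where
  "Y2hist f k \<omega> = map (\<lambda>j. if calvin_rec (snd (snd (snd \<omega>)) ! (j - 1)) then Some (Xv f j \<omega>) else None)
      [1..<Suc k]"

definition Shist :: "nat \<Rightarrow> 'a list \<times> 'a list \<times> 'r \<times> chstate list \<Rightarrow> chstate list" where
  "Shist k \<omega> = take k (snd (snd (snd \<omega>)))"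

definition W1v :: "'a list \<times> 'a list \<times> 'r \<times> chstate list \<Rightarrow> 'a list" where
  "W1v \<omega> = fst \<omega>"

end

theory Submission
  imports Defs
begin

text \<open>
  Let \<open>G\<^sub>m = H(Y\<^sub>1\<^sup>m | Y\<^sub>2\<^sup>m S\<^sup>m W\<^sub>1)\<close>, the uncertainty about Bob's outputs that remains for
  someone who sees Calvin's outputs, the states and \<open>W\<^sub>1\<close>.  Write it as the difference of the
  entropies of the full view \<open>(Y\<^sub>1\<^sup>m, Y\<^sub>2\<^sup>m, S\<^sup>m, W\<^sub>1)\<close> and Calvin's view \<open>(Y\<^sub>2\<^sup>m, S\<^sup>m, W\<^sub>1)\<close>.  In slot
  \<open>i = m + 1\<close> both views are extended by the fresh state \<open>S\<^sub>i\<close>, which is independent of the past,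
  and by an erased copy of \<open>X\<^sub>i\<close>.  An erasure channel that lets \<open>X\<close> through with probability \<open>q\<close>
  adds \<open>H(S) + q H(X | view)\<close> to the entropy of the view, so with \<open>q = 1 - \<delta>\<^sub>1\<delta>\<^sub>2\<close> resp.
  \<open>q = 1 - \<delta>\<^sub>2\<close> one gets
    \<open>G\<^sub>i - G\<^sub>i\<^sub>-\<^sub>1 = \<delta>\<^sub>2(1-\<delta>\<^sub>1) H(X\<^sub>i | Y\<^sub>1\<^sup>i\<^sup>-\<^sup>1 Y\<^sub>2\<^sup>i\<^sup>-\<^sup>1 S\<^sup>i\<^sup>-\<^sup>1 W\<^sub>1) - (1-\<delta>\<^sub>2) I(X\<^sub>i; Y\<^sub>1\<^sup>i\<^sup>-\<^sup>1 | Y\<^sub>2\<^sup>i\<^sup>-\<^sup>1 S\<^sup>i\<^sup>-\<^sup>1 W\<^sub>1)\<close>.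
  Since \<open>G\<^sub>0 = 0\<close> and \<open>G\<^sub>n \<ge> 0\<close>, summing these increments gives the claim.
\<close>

section \<open>Entropy of finitely supported distributions\<close>

definition pmf_entropy :: "'a pmf \<Rightarrow> real" where
  "pmf_entropy p = - (\<Sum>x\<in>set_pmf p. pmf p x * log 2 (pmf p x))"

lemma dentropy_eq_pmf_entropy: "dentropy M X = pmf_entropy (map_pmf X M)"
  by (simp add: dentropy_def pmf_entropy_def)

definition plogp_sum :: "'a pmf \<Rightarrow> 'a set \<Rightarrow> real" where
  "plogp_sum p A = (\<Sum>x\<in>A. pmf p x * log 2 (pmf p x))"

lemma pmf_entropy_superset:
  assumes "finite A" "set_pmf p \<subseteq> A"
  shows "pmf_entropy p = - plogp_sum p A"
  unfolding pmf_entropy_def plogp_sum_def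
  by (rule arg_cong[where f=uminus], rule sum.mono_neutral_left) (use assms in \<open>auto simp: set_pmf_iff\<close>)

lemma sum_set_pmf_map_pmf:
  assumes "finite (set_pmf p)"
  shows "(\<Sum>x\<in>set_pmf p. pmf p x * h (g x)) = (\<Sum>y\<in>set_pmf (map_pmf g p). pmf (map_pmf g p) y * h y)"
proof -
  let ?S = "set_pmf p"
  have "(\<Sum>x\<in>?S. pmf p x * h (g x)) = (\<Sum>y\<in>g ` ?S. \<Sum>x\<in>{x\<in>?S. g x = y}. pmf p x * h (g x))"
    by (rule sum.image_gen[OF assms])
  also have "\<dots> = (\<Sum>y\<in>g ` ?S. pmf (map_pmf g p) y * h y)"
  proof (rule sum.cong[OF refl])
    fix y
    have "(\<Sum>x\<in>{x\<in>?S. g x = y}. pmf p x) = measure p (g -` {y} \<inter> ?S)"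
      by (subst measure_measure_pmf_finite) (auto intro: finite_subset[OF _ assms] intro!: sum.cong)
    also have "\<dots> = pmf (map_pmf g p) y"
      by (simp add: measure_Int_set_pmf pmf_map)
    finally show "(\<Sum>x\<in>{x\<in>?S. g x = y}. pmf p x * h (g x)) = pmf (map_pmf g p) y * h y"
      by (simp add: sum_distrib_right[symmetric])
  qed
  finally show ?thesis by simp
qed

lemma pmf_entropy_map_inj:
  assumes "inj_on g (set_pmf p)"
  shows "pmf_entropy (map_pmf g p) = pmf_entropy p"
  unfolding pmf_entropy_def using assms by (simp add: sum.reindex pmf_map_inj)

text \<open>Processing cannot increase entropy: \<open>H(g(X)) \<le> H(X)\<close>, since every atom of the image
  carries at least the mass of each of its preimages.\<close>
lemma pmf_entropy_map_le:
  assumes "finite (set_pmf p)"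
  shows "pmf_entropy (map_pmf g p) \<le> pmf_entropy p"
proof -
  have "pmf_entropy (map_pmf g p) = - (\<Sum>x\<in>set_pmf p. pmf p x * log 2 (pmf (map_pmf g p) (g x)))"
    unfolding pmf_entropy_def
    using sum_set_pmf_map_pmf[OF assms, of "\<lambda>y. log 2 (pmf (map_pmf g p) y)" g] by simp
  also have "\<dots> \<le> pmf_entropy p"
    unfolding pmf_entropy_def
  proof (rule le_imp_neg_le, rule sum_mono)
    fix x assume x: "x \<in> set_pmf p"
    have px: "0 < pmf p x" using x by (simp add: pmf_positive)
    have "pmf p x = measure p {x}" by (simp add: measure_pmf_single)
    also have "\<dots> \<le> measure p (g -` {g x})"
      by (rule measure_pmf.finite_measure_mono) auto
    also have "\<dots> = pmf (map_pmf g p) (g x)" by (simp add: pmf_map)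
    finally have "log 2 (pmf p x) \<le> log 2 (pmf (map_pmf g p) (g x))"
      using px by simp
    then show "pmf p x * log 2 (pmf p x) \<le> pmf p x * log 2 (pmf (map_pmf g p) (g x))"
      using px by (simp add: mult_left_mono)
  qed
  finally show ?thesis .
qed

lemma cond_dentropy_chain_rule:
  assumes "finite (set_pmf (map_pmf (\<lambda>w. (X w, Z w)) M))"
  shows "cond_dentropy M X Z = dentropy M (\<lambda>w. (X w, Z w)) - dentropy M Z"
proof -
  let ?J = "map_pmf (\<lambda>w. (X w, Z w)) M"
  have marginal: "map_pmf snd ?J = map_pmf Z M" by (simp add: map_pmf_comp)
  have "cond_dentropy M X Z = - (\<Sum>xz\<in>set_pmf ?J. pmf ?J xz * log 2 (pmf ?J xz)
          - pmf ?J xz * log 2 (pmf (map_pmf Z M) (snd xz)))"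
    unfolding cond_dentropy_def
  proof (rule arg_cong[where f=uminus], rule sum.cong[OF refl])
    fix xz assume xz: "xz \<in> set_pmf ?J"
    then have "snd xz \<in> set_pmf (map_pmf snd ?J)" by auto
    then have "0 < pmf (map_pmf Z M) (snd xz)" using marginal by (simp add: pmf_positive)
    moreover have "0 < pmf ?J xz" using xz by (simp add: pmf_positive)
    ultimately show "pmf ?J xz * log 2 (pmf ?J xz / pmf (map_pmf Z M) (snd xz)) =
         pmf ?J xz * log 2 (pmf ?J xz) - pmf ?J xz * log 2 (pmf (map_pmf Z M) (snd xz))"
      by (simp add: log_divide right_diff_distrib)
  qed
  also have "\<dots> = pmf_entropy ?J + (\<Sum>xz\<in>set_pmf ?J. pmf ?J xz * log 2 (pmf (map_pmf Z M) (snd xz)))"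
    unfolding pmf_entropy_def by (simp add: sum_subtractf)
  also have "(\<Sum>xz\<in>set_pmf ?J. pmf ?J xz * log 2 (pmf (map_pmf Z M) (snd xz))) = - pmf_entropy (map_pmf Z M)"
    using sum_set_pmf_map_pmf[OF assms, of "\<lambda>z. log 2 (pmf (map_pmf Z M) z)" snd] marginal
    unfolding pmf_entropy_def by simp
  finally show ?thesis by (simp add: dentropy_eq_pmf_entropy)
qed

section \<open>Entropy seen through an erasure channel\<close>

definition erasure_pmf :: "('s \<Rightarrow> bool) \<Rightarrow> ('x \<times> 'p) pmf \<Rightarrow> 's pmf \<Rightarrow> ('p \<times> 's \<times> 'x option) pmf" where
  "erasure_pmf R \<rho> \<nu> = map_pmf (\<lambda>((x, p), s). (p, s, if R s then Some x else None)) (pair_pmf \<rho> \<nu>)"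

lemma pmf_erasure_received:
  fixes \<rho> :: "('x \<times> 'p) pmf" and \<nu> :: "'s pmf"
  assumes "R s"
  shows "pmf (erasure_pmf R \<rho> \<nu>) (p, s, Some x) = pmf \<rho> (x, p) * pmf \<nu> s"
proof -
  have "(\<lambda>((x, p), s). (p, s, if R s then Some x else None)) -` {(p, s, Some x)} = {((x, p), s)}"
    using assms by (auto split: if_splits)
  then show ?thesis
    unfolding erasure_pmf_def pmf_map by (simp add: measure_pmf_single pmf_pair)
qed

lemma pmf_erasure_erased:
  fixes \<rho> :: "('x \<times> 'p) pmf" and \<nu> :: "'s pmf"
  assumes "\<not> R s"
  shows "pmf (erasure_pmf R \<rho> \<nu>) (p, s, None) = pmf (map_pmf snd \<rho>) p * pmf \<nu> s"
proof -
  let ?forget = "\<lambda>((x::'x, p::'p), s::'s). (p, s)"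
  have "(\<lambda>((x, p), s). (p, s, if R s then Some x else None)) -` {(p, s, None)} = ?forget -` {(p, s)}"
    using assms by (auto split: if_splits)
  then have "pmf (erasure_pmf R \<rho> \<nu>) (p, s, None) = pmf (map_pmf ?forget (pair_pmf \<rho> \<nu>)) (p, s)"
    unfolding erasure_pmf_def pmf_map by (simp only:)
  also have "map_pmf ?forget (pair_pmf \<rho> \<nu>) = pair_pmf (map_pmf snd \<rho>) \<nu>"
    using map_pair[of snd "\<lambda>s. s" \<rho> \<nu>] by (simp add: case_prod_unfold)
  finally show ?thesis by (simp add: pmf_pair)
qed

text \<open>The \<open>p log p\<close> sum of a product weight on a rectangle splits into the two marginal
  contributions; this is what makes entropies of independent parts add up.\<close>
lemma sum_plogp_product:
  assumes "finite A" "finite B" "\<And>a. a \<in> A \<Longrightarrow> 0 < u a" "\<And>b. b \<in> B \<Longrightarrow> 0 < v b"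
    and inj: "inj_on g (A \<times> B)" and mass: "\<And>a b. a \<in> A \<Longrightarrow> b \<in> B \<Longrightarrow> pmf T (g (a, b)) = u a * v b"
  shows "plogp_sum T (g ` (A \<times> B)) =
    (\<Sum>a\<in>A. u a * log 2 (u a)) * (\<Sum>b\<in>B. v b) + (\<Sum>a\<in>A. u a) * (\<Sum>b\<in>B. v b * log 2 (v b))"
proof -
  have "plogp_sum T (g ` (A \<times> B)) =
        (\<Sum>a\<in>A. \<Sum>b\<in>B. (u a * log 2 (u a)) * v b + u a * (v b * log 2 (v b)))"
    unfolding plogp_sum_def sum.reindex[OF inj] sum.cartesian_product' o_def
    by (intro sum.cong refl) (use assms in \<open>simp add: mass log_mult algebra_simps\<close>)
  also have "\<dots> = (\<Sum>a\<in>A. u a * log 2 (u a)) * (\<Sum>b\<in>B. v b) + (\<Sum>a\<in>A. u a) * (\<Sum>b\<in>B. v b * log 2 (v b))"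
    by (simp add: sum.distrib sum_product mult.assoc)
  finally show ?thesis .
qed

lemma pmf_entropy_erasure:
  fixes \<rho> :: "('x \<times> 'p) pmf" and \<nu> :: "'s pmf"
  assumes fin_\<rho>: "finite (set_pmf \<rho>)" and fin_\<nu>: "finite (set_pmf \<nu>)"
  shows "pmf_entropy (erasure_pmf R \<rho> \<nu>) = pmf_entropy (map_pmf snd \<rho>) + pmf_entropy \<nu> +
           measure \<nu> {s. R s} * (pmf_entropy \<rho> - pmf_entropy (map_pmf snd \<rho>))"
proof -
  define T where "T = erasure_pmf R \<rho> \<nu>"
  define P where "P = map_pmf snd \<rho>"
  define SR where "SR = {s\<in>set_pmf \<nu>. R s}"
  define SN where "SN = {s\<in>set_pmf \<nu>. \<not> R s}"
  define received where "received = (\<lambda>(xp::'x \<times> 'p, s::'s). (snd xp, s, Some (fst xp)))"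
  define erased where "erased = (\<lambda>(p::'p, s::'s). (p, s, None :: 'x option))"
  define m where "m = measure \<nu> {s. R s}"
  have fin: "finite (set_pmf P)" "finite SR" "finite SN"
    unfolding P_def SR_def SN_def using fin_\<rho> fin_\<nu> by auto
  have supp: "set_pmf T \<subseteq> received ` (set_pmf \<rho> \<times> SR) \<union> erased ` (set_pmf P \<times> SN)"
    unfolding T_def erasure_pmf_def received_def erased_def P_def SR_def SN_def
    by (force split: if_splits)
  have disj: "received ` (set_pmf \<rho> \<times> SR) \<inter> erased ` (set_pmf P \<times> SN) = {}"
    unfolding received_def erased_def by auto
  have states: "SR \<union> SN = set_pmf \<nu>" "SR \<inter> SN = {}"
    unfolding SR_def SN_def by auto
  have mass_SR: "(\<Sum>s\<in>SR. pmf \<nu> s) = m"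
    using measure_Int_set_pmf[of \<nu> "{s. R s}"] measure_measure_pmf_finite[OF fin(2), of \<nu>]
    unfolding SR_def m_def by (simp add: Int_def conj_commute)
  have mass_SN: "(\<Sum>s\<in>SN. pmf \<nu> s) = 1 - m"
    using sum.union_disjoint[OF fin(2,3) states(2), of "pmf \<nu>"] sum_pmf_eq_1[OF fin_\<nu>, of \<nu>]
    by (simp add: states(1) mass_SR)
  have plogp_states: "plogp_sum \<nu> SR + plogp_sum \<nu> SN = - pmf_entropy \<nu>"
    using sum.union_disjoint[OF fin(2,3) states(2), of "\<lambda>s. pmf \<nu> s * log 2 (pmf \<nu> s)"]
      pmf_entropy_superset[OF fin_\<nu> order_refl]
    by (simp add: states(1) plogp_sum_def)
  have total: "(\<Sum>xp\<in>set_pmf \<rho>. pmf \<rho> xp) = 1" "(\<Sum>p\<in>set_pmf P. pmf P p) = 1"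
    using fin fin_\<rho> by (auto intro: sum_pmf_eq_1)
  have "pmf_entropy T = - (plogp_sum T (received ` (set_pmf \<rho> \<times> SR)) + plogp_sum T (erased ` (set_pmf P \<times> SN)))"
    using pmf_entropy_superset[OF _ supp] fin fin_\<rho> disj
    by (simp add: plogp_sum_def sum.union_disjoint)
  also have "plogp_sum T (received ` (set_pmf \<rho> \<times> SR)) = plogp_sum \<rho> (set_pmf \<rho>) * m + plogp_sum \<nu> SR"
  proof -
    have "plogp_sum T (received ` (set_pmf \<rho> \<times> SR)) = plogp_sum \<rho> (set_pmf \<rho>) * (\<Sum>s\<in>SR. pmf \<nu> s)
        + (\<Sum>xp\<in>set_pmf \<rho>. pmf \<rho> xp) * plogp_sum \<nu> SR"
      unfolding plogp_sum_def[of \<rho>] plogp_sum_def[of \<nu>]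
      by (rule sum_plogp_product) (use fin fin_\<rho> in \<open>auto simp: SR_def received_def T_def
          pmf_positive inj_on_def pmf_erasure_received\<close>)
    then show ?thesis by (simp add: mass_SR total)
  qed
  also have "plogp_sum T (erased ` (set_pmf P \<times> SN)) = plogp_sum P (set_pmf P) * (1 - m) + plogp_sum \<nu> SN"
  proof -
    have "plogp_sum T (erased ` (set_pmf P \<times> SN)) = plogp_sum P (set_pmf P) * (\<Sum>s\<in>SN. pmf \<nu> s)
        + (\<Sum>p\<in>set_pmf P. pmf P p) * plogp_sum \<nu> SN"
      unfolding plogp_sum_def[of P] plogp_sum_def[of \<nu>]
      by (rule sum_plogp_product) (use fin in \<open>auto simp: SN_def erased_def T_def P_def
          pmf_positive inj_on_def pmf_erasure_erased\<close>)
    then show ?thesis by (simp add: mass_SN total)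
  qed
  finally show ?thesis
    using plogp_states pmf_entropy_superset[OF fin_\<rho> order_refl] pmf_entropy_superset[OF fin(1) order_refl]
    unfolding T_def P_def m_def by (simp add: algebra_simps)
qed

lemma dentropy_erasure_update:
  fixes X :: "'o \<Rightarrow> 'x" and P :: "'o \<Rightarrow> 'p" and K :: "'o \<Rightarrow> 's"
  assumes indep: "map_pmf (\<lambda>\<omega>. ((X \<omega>, P \<omega>), K \<omega>)) M = pair_pmf (map_pmf (\<lambda>\<omega>. (X \<omega>, P \<omega>)) M) \<nu>"
    and fin: "finite (set_pmf (map_pmf (\<lambda>\<omega>. (X \<omega>, P \<omega>)) M))" and fin_\<nu>: "finite (set_pmf \<nu>)"
    and recode: "\<And>\<omega>. \<omega> \<in> set_pmf M \<Longrightarrow> Q \<omega> = g (P \<omega>, K \<omega>, if R (K \<omega>) then Some (X \<omega>) else None)"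
    and inj: "inj_on g {(p, s, y). R s \<or> y = None}"
  shows "dentropy M Q = dentropy M P + pmf_entropy \<nu> + measure \<nu> {s. R s} * cond_dentropy M X P"
proof -
  let ?\<rho> = "map_pmf (\<lambda>\<omega>. (X \<omega>, P \<omega>)) M"
  have "map_pmf Q M = map_pmf (\<lambda>\<omega>. g (P \<omega>, K \<omega>, if R (K \<omega>) then Some (X \<omega>) else None)) M"
    by (rule map_pmf_cong[OF refl]) (simp add: recode)
  also have "\<dots> = map_pmf g (erasure_pmf R ?\<rho> \<nu>)"
    unfolding erasure_pmf_def indep[symmetric] by (simp add: map_pmf_comp)
  finally have Q_law: "map_pmf Q M = map_pmf g (erasure_pmf R ?\<rho> \<nu>)" .
  have "set_pmf (erasure_pmf R ?\<rho> \<nu>) \<subseteq> {(p, s, y). R s \<or> y = None}"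
    unfolding erasure_pmf_def by (auto split: if_splits)
  then have "dentropy M Q = pmf_entropy (erasure_pmf R ?\<rho> \<nu>)"
    unfolding dentropy_eq_pmf_entropy Q_law by (intro pmf_entropy_map_inj inj_on_subset[OF inj])
  then show ?thesis
    using pmf_entropy_erasure[OF fin fin_\<nu>, of R] cond_dentropy_chain_rule[OF fin]
    by (simp add: dentropy_eq_pmf_entropy map_pmf_comp)
qed

section \<open>The next channel state is independent of the past\<close>

lemma replicate_pmf_prefix_next:
  assumes "m < n"
  shows "map_pmf (\<lambda>s. (take m s, s ! m)) (replicate_pmf n \<nu>) = pair_pmf (replicate_pmf m \<nu>) \<nu>"
proof -
  define r where "r = n - Suc m"
  have n: "n = m + Suc r" using assms unfolding r_def by simp
  have split: "replicate_pmf n \<nu> = bind_pmf (replicate_pmf m \<nu>) (\<lambda>xs. bind_pmf \<nu> (\<lambda>x.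
      bind_pmf (replicate_pmf r \<nu>) (\<lambda>ys. return_pmf (xs @ x # ys))))"
    unfolding n replicate_pmf_distrib replicate_pmf.simps(2)
    by (simp only: bind_assoc_pmf bind_return_pmf)
  have "map_pmf (\<lambda>s. (take m s, s ! m)) (replicate_pmf n \<nu>) =
     bind_pmf (replicate_pmf m \<nu>) (\<lambda>xs. bind_pmf \<nu> (\<lambda>x. bind_pmf (replicate_pmf r \<nu>)
       (\<lambda>ys. return_pmf (take m (xs @ x # ys), (xs @ x # ys) ! m))))"
    unfolding split by (simp only: map_bind_pmf map_return_pmf)
  also have "\<dots> = bind_pmf (replicate_pmf m \<nu>) (\<lambda>xs. bind_pmf \<nu> (\<lambda>x. return_pmf (xs, x)))"
  proof (rule bind_pmf_cong[OF refl])
    fix xs assume "xs \<in> set_pmf (replicate_pmf m \<nu>)"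
    then have "length xs = m" by (simp add: set_replicate_pmf)
    then have "\<And>x ys. (take m (xs @ x # ys), (xs @ x # ys) ! m) = (xs, x)" by (simp add: nth_append)
    then show "bind_pmf \<nu> (\<lambda>x. bind_pmf (replicate_pmf r \<nu>)
        (\<lambda>ys. return_pmf (take m (xs @ x # ys), (xs @ x # ys) ! m))) = bind_pmf \<nu> (\<lambda>x. return_pmf (xs, x))"
      by (simp only: bind_pmf_const)
  qed
  also have "\<dots> = pair_pmf (replicate_pmf m \<nu>) \<nu>" by (simp only: pair_pmf_def)
  finally show ?thesis .
qed

lemma bind_replicate_pmf_prefix_next:
  assumes "m < n"
  shows "bind_pmf (replicate_pmf n \<nu>) (\<lambda>s. G (take m s) (s ! m)) =
    bind_pmf (replicate_pmf m \<nu>) (\<lambda>a. bind_pmf \<nu> (G a))"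
proof -
  have "bind_pmf (replicate_pmf n \<nu>) (\<lambda>s. G (take m s) (s ! m)) =
     bind_pmf (map_pmf (\<lambda>s. (take m s, s ! m)) (replicate_pmf n \<nu>)) (\<lambda>(a, x). G a x)"
    by (simp add: bind_map_pmf)
  then show ?thesis
    unfolding replicate_pmf_prefix_next[OF assms] pair_pmf_def
    by (simp add: bind_assoc_pmf bind_return_pmf)
qed

corollary bind_replicate_pmf_prefix:
  assumes "m < n"
  shows "bind_pmf (replicate_pmf n \<nu>) (\<lambda>s. G (take m s)) = bind_pmf (replicate_pmf m \<nu>) G"
  using bind_replicate_pmf_prefix_next[OF assms, of \<nu> "\<lambda>a x. G a"] by (simp add: bind_pmf_const)

text \<open>The outcome with the channel states cut down to the first \<open>m\<close> slots, and the state
  \<open>S\<^sub>m\<^sub>+\<^sub>1\<close> of slot \<open>m + 1\<close> (0-based index \<open>m\<close>).\<close>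
definition past :: "nat \<Rightarrow> 'w \<times> 'w \<times> 'r \<times> 's list \<Rightarrow> 'w \<times> 'w \<times> 'r \<times> 's list" where
  "past m \<omega> = (case \<omega> of (w1, w2, t, s) \<Rightarrow> (w1, w2, t, take m s))"

definition next_state :: "nat \<Rightarrow> 'w \<times> 'w \<times> 'r \<times> 's list \<Rightarrow> 's" where
  "next_state m \<omega> = snd (snd (snd \<omega>)) ! m"

lemma converse_space_past_next:
  assumes "m < n"
  shows "map_pmf (\<lambda>\<omega>. (past m \<omega>, next_state m \<omega>)) (converse_space L N1 N2 th n d1 d2)
    = pair_pmf (map_pmf (past m) (converse_space L N1 N2 th n d1 d2)) (state_pmf d1 d2)"
proof -
  let ?W1 = "pmf_of_set {w. length w = L * N1}" and ?W2 = "pmf_of_set {w. length w = L * N2}"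
  let ?\<nu> = "state_pmf d1 d2"
  have joint: "bind_pmf (replicate_pmf n ?\<nu>) (\<lambda>s. return_pmf ((w1, w2, t, take m s), s ! m)) =
    bind_pmf (replicate_pmf m ?\<nu>) (\<lambda>a. bind_pmf ?\<nu> (\<lambda>x. return_pmf ((w1, w2, t, a), x)))" for w1 w2 t
    by (rule bind_replicate_pmf_prefix_next[OF assms, of ?\<nu> "\<lambda>a x. return_pmf ((w1, w2, t, a), x)"])
  have product: "bind_pmf (replicate_pmf n ?\<nu>) (\<lambda>s. bind_pmf ?\<nu> (\<lambda>x. return_pmf ((w1, w2, t, take m s), x))) =
    bind_pmf (replicate_pmf m ?\<nu>) (\<lambda>a. bind_pmf ?\<nu> (\<lambda>x. return_pmf ((w1, w2, t, a), x)))" for w1 w2 t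
    by (rule bind_replicate_pmf_prefix[OF assms, of ?\<nu> "\<lambda>a. bind_pmf ?\<nu> (\<lambda>x. return_pmf ((w1, w2, t, a), x))"])
  have "map_pmf (\<lambda>\<omega>. (past m \<omega>, next_state m \<omega>)) (converse_space L N1 N2 th n d1 d2) =
     bind_pmf ?W1 (\<lambda>w1. bind_pmf ?W2 (\<lambda>w2. bind_pmf th (\<lambda>t.
       bind_pmf (replicate_pmf n ?\<nu>) (\<lambda>s. return_pmf ((w1, w2, t, take m s), s ! m)))))"
    unfolding converse_space_def past_def next_state_def
    by (simp only: map_bind_pmf map_return_pmf) simp
  also have "\<dots> = bind_pmf ?W1 (\<lambda>w1. bind_pmf ?W2 (\<lambda>w2. bind_pmf th (\<lambda>t.
       bind_pmf (replicate_pmf n ?\<nu>) (\<lambda>s. bind_pmf ?\<nu> (\<lambda>x. return_pmf ((w1, w2, t, take m s), x))))))"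
    by (simp only: joint product)
  also have "\<dots> = pair_pmf (map_pmf (past m) (converse_space L N1 N2 th n d1 d2)) ?\<nu>"
    unfolding converse_space_def past_def pair_pmf_def
    by (simp only: map_bind_pmf map_return_pmf bind_assoc_pmf bind_return_pmf) simp
  finally show ?thesis .
qed

lemma pair_pmf_through:
  assumes indep: "map_pmf (\<lambda>\<omega>. (B \<omega>, K \<omega>)) M = pair_pmf (map_pmf B M) \<nu>"
    and through: "\<And>\<omega>. V (B \<omega>) = V \<omega>"
  shows "map_pmf (\<lambda>\<omega>. (V \<omega>, K \<omega>)) M = pair_pmf (map_pmf V M) \<nu>"
proof -
  have "map_pmf (\<lambda>\<omega>. (V \<omega>, K \<omega>)) M = map_pmf (\<lambda>(b, k). (V b, k)) (map_pmf (\<lambda>\<omega>. (B \<omega>, K \<omega>)) M)"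
    by (simp add: map_pmf_comp through)
  also have "\<dots> = pair_pmf (map_pmf V M) \<nu>"
    using map_pair[of V "\<lambda>k. k" "map_pmf B M" \<nu>] unfolding indep by (simp add: map_pmf_comp through)
  finally show ?thesis .
qed

lemma finite_UNIV_chstate: "finite (UNIV :: chstate set)"
proof -
  have "(UNIV :: chstate set) = {StB, StC, StBC, StNone}" using chstate.exhaust by auto
  then show ?thesis by (metis finite.emptyI finite.insertI)
qed

lemma state_pmf_receive_probabilities:
  assumes "0 \<le> d1" "d1 \<le> 1" "0 \<le> d2" "d2 \<le> 1"
  shows "measure (state_pmf d1 d2) {s. bob_rec s \<or> calvin_rec s} = 1 - d1 * d2"
    and "measure (state_pmf d1 d2) {s. calvin_rec s} = 1 - d2"
proof -
  have someone: "(\<lambda>(b, c). mk_state b c) -` {s. bob_rec s \<or> calvin_rec s} = {(True, True), (True, False), (False, True)}"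
    by (auto simp: mk_state_def split: if_splits)
  have calvin: "(\<lambda>(b, c). mk_state b c) -` {s. calvin_rec s} = {(True, True), (False, True)}"
    by (auto simp: mk_state_def split: if_splits)
  show "measure (state_pmf d1 d2) {s. bob_rec s \<or> calvin_rec s} = 1 - d1 * d2"
    unfolding state_pmf_def measure_map_pmf someone
    by (subst measure_measure_pmf_finite) (use assms in \<open>simp_all add: pmf_pair algebra_simps\<close>)
  show "measure (state_pmf d1 d2) {s. calvin_rec s} = 1 - d2"
    unfolding state_pmf_def measure_map_pmf calvin
    by (subst measure_measure_pmf_finite) (use assms in \<open>simp_all add: pmf_pair algebra_simps\<close>)
qed

lemma set_pmf_converse_space:
  assumes "\<omega> \<in> set_pmf (converse_space L N1 N2 th n d1 d2 :: ('a::{finite,field} list \<times> _) pmf)"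
  shows "length (W1v \<omega>) = L * N1" "length (snd (snd (snd \<omega>))) = n"
proof -
  have "{w :: 'a list. length w = k} \<noteq> {}" for k
    by (metis (mono_tags) empty_iff length_replicate mem_Collect_eq)
  moreover have "finite {w :: 'a list. length w = k}" for k
    using finite_lists_length_eq[of "UNIV :: 'a set" k] by simp
  ultimately show "length (W1v \<omega>) = L * N1" "length (snd (snd (snd \<omega>))) = n"
    using assms unfolding converse_space_def W1v_def
    by (auto simp: set_pmf_of_set set_replicate_pmf)
qed

lemma Y1hist_Suc:
  "Y1hist f (Suc m) \<omega> = Y1hist f m \<omega> @ [if bob_rec (next_state m \<omega>) then Some (Xv f (Suc m) \<omega>) else None]"
  by (simp add: Y1hist_def next_state_def)

lemma Y2hist_Suc:
  "Y2hist f (Suc m) \<omega> = Y2hist f m \<omega> @ [if calvin_rec (next_state m \<omega>) then Some (Xv f (Suc m) \<omega>) else None]"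
  by (simp add: Y2hist_def next_state_def)

lemma Shist_Suc:
  "m < length (snd (snd (snd \<omega>))) \<Longrightarrow> Shist (Suc m) \<omega> = Shist m \<omega> @ [next_state m \<omega>]"
  by (simp add: Shist_def next_state_def take_Suc_conv_app_nth)

lemma causal_past:
  "Xv f (Suc m) (past m \<omega>) = Xv f (Suc m) \<omega>"
  "Y1hist f m (past m \<omega>) = Y1hist f m \<omega>"
  "Y2hist f m (past m \<omega>) = Y2hist f m \<omega>"
  "Shist m (past m \<omega>) = Shist m \<omega>"
  "W1v (past m \<omega>) = W1v \<omega>"
  by (cases \<omega>; auto simp: Xv_def Y1hist_def Y2hist_def Shist_def W1v_def past_def min_def
      intro!: map_cong)+

lemma finite_image_pair:
  "finite (A ` S) \<Longrightarrow> finite (B ` S) \<Longrightarrow> finite ((\<lambda>\<omega>. (A \<omega>, B \<omega>)) ` S)"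
  by (rule finite_subset[of _ "A ` S \<times> B ` S"]) auto

section \<open>The entropy gap between the two receivers' views\<close>

locale converse_setting =
  fixes L N1 N2 n :: nat and th :: "'r pmf" and d1 d2 :: real
    and f :: "nat \<Rightarrow> 'a::{finite,field} list \<Rightarrow> 'a list \<Rightarrow> 'r \<Rightarrow> chstate list \<Rightarrow> 'a list"
  assumes d1: "0 < d1" "d1 < 1" and d2: "0 < d2" "d2 < 1"
    and length_f: "\<And>i w1 w2 t ss. length (f i w1 w2 t ss) = L"
begin

abbreviation model :: "('a list \<times> 'a list \<times> 'r \<times> chstate list) pmf" where
  "model \<equiv> converse_space L N1 N2 th n d1 d2"

definition full_obs :: "nat \<Rightarrow> 'a list \<times> 'a list \<times> 'r \<times> chstate list
    \<Rightarrow> 'a list option list \<times> 'a list option list \<times> chstate list \<times> 'a list" where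
  "full_obs m = (\<lambda>\<omega>. (Y1hist f m \<omega>, Y2hist f m \<omega>, Shist m \<omega>, W1v \<omega>))"

definition calvin_obs :: "nat \<Rightarrow> 'a list \<times> 'a list \<times> 'r \<times> chstate list
    \<Rightarrow> 'a list option list \<times> chstate list \<times> 'a list" where
  "calvin_obs m = (\<lambda>\<omega>. (Y2hist f m \<omega>, Shist m \<omega>, W1v \<omega>))"

text \<open>The gap \<open>H(Y\<^sub>1\<^sup>m | Y\<^sub>2\<^sup>m S\<^sup>m W\<^sub>1)\<close>: Calvin's remaining uncertainty about Bob's outputs.\<close>
definition gap :: "nat \<Rightarrow> real" where
  "gap m = dentropy model (full_obs m) - dentropy model (calvin_obs m)"

text \<open>All observed quantities have finite range on the support of the model; only
  Alice's randomness is unrestricted, and it is never observed directly.\<close>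
lemma finite_ranges:
  "finite (Xv f i ` set_pmf model)" "finite (Y1hist f m ` set_pmf model)"
  "finite (Y2hist f m ` set_pmf model)" "finite (Shist m ` set_pmf model)"
  "finite (W1v ` set_pmf model)"
proof -
  let ?inputs = "{xs :: 'a list. length xs = L}"
  have lenX: "length (Xv f i \<omega>) = L" for i \<omega>
    by (cases \<omega>) (simp add: Xv_def length_f)
  have fin_inputs: "finite ?inputs"
    using finite_lists_length_eq[of "UNIV :: 'a set" L] by simp
  then have fin_outputs: "finite (insert None (Some ` ?inputs))" by simp
  show "finite (Xv f i ` set_pmf model)"
    by (rule finite_subset[OF _ fin_inputs]) (auto simp: lenX)
  show "finite (Y1hist f m ` set_pmf model)"
    by (rule finite_subset[OF _ finite_lists_length_eq[OF fin_outputs, of m]])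
       (auto simp: Y1hist_def lenX)
  show "finite (Y2hist f m ` set_pmf model)"
    by (rule finite_subset[OF _ finite_lists_length_eq[OF fin_outputs, of m]])
       (auto simp: Y2hist_def lenX)
  show "finite (Shist m ` set_pmf model)"
    by (rule finite_subset[OF _ finite_lists_length_le[OF finite_UNIV_chstate, of m]])
       (auto simp: Shist_def)
  show "finite (W1v ` set_pmf model)"
    by (rule finite_subset[OF _ finite_lists_length_eq[of "UNIV :: 'a set" "L * N1"]])
       (auto dest: set_pmf_converse_space)
qed

lemma finite_obs:
  "finite (set_pmf (map_pmf (full_obs m) model))"
  "finite (set_pmf (map_pmf (\<lambda>\<omega>. (Xv f i \<omega>, full_obs m \<omega>)) model))"
  "finite (set_pmf (map_pmf (\<lambda>\<omega>. (Xv f i \<omega>, calvin_obs m \<omega>)) model))"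
proof -
  have obs: "finite (full_obs m ` set_pmf model)" "finite (calvin_obs m ` set_pmf model)"
    unfolding full_obs_def calvin_obs_def by (intro finite_image_pair finite_ranges)+
  then show "finite (set_pmf (map_pmf (full_obs m) model))"
    "finite (set_pmf (map_pmf (\<lambda>\<omega>. (Xv f i \<omega>, full_obs m \<omega>)) model))"
    "finite (set_pmf (map_pmf (\<lambda>\<omega>. (Xv f i \<omega>, calvin_obs m \<omega>)) model))"
    unfolding set_map_pmf by (intro finite_image_pair finite_ranges obs)+
qed

lemma finite_set_state_pmf: "finite (set_pmf (state_pmf d1 d2))"
  using finite_UNIV_chstate by (rule finite_subset[rotated]) simp

text \<open>In slot \<open>m + 1\<close> the pair of views receives the input exactly when someone receives it.\<close>
lemma dentropy_full_obs_Suc: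
  assumes "m < n"
  shows "dentropy model (full_obs (Suc m)) = dentropy model (full_obs m) + pmf_entropy (state_pmf d1 d2)
           + (1 - d1 * d2) * cond_dentropy model (Xv f (Suc m)) (full_obs m)"
proof -
  define append_slot where "append_slot = (\<lambda>((y1 :: 'a list option list, y2 :: 'a list option list,
       ss :: chstate list, w :: 'a list), s :: chstate, y :: 'a list option).
       (y1 @ [if bob_rec s then y else None], y2 @ [if calvin_rec s then y else None], ss @ [s], w))"
  have indep: "map_pmf (\<lambda>\<omega>. ((Xv f (Suc m) \<omega>, full_obs m \<omega>), next_state m \<omega>)) model
      = pair_pmf (map_pmf (\<lambda>\<omega>. (Xv f (Suc m) \<omega>, full_obs m \<omega>)) model) (state_pmf d1 d2)"
    by (rule pair_pmf_through[OF converse_space_past_next[OF assms]]) (simp add: full_obs_def causal_past)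
  have recode: "full_obs (Suc m) \<omega> = append_slot (full_obs m \<omega>, next_state m \<omega>,
      if bob_rec (next_state m \<omega>) \<or> calvin_rec (next_state m \<omega>) then Some (Xv f (Suc m) \<omega>) else None)"
    if "\<omega> \<in> set_pmf model" for \<omega>
    using set_pmf_converse_space(2)[OF that] assms
    by (simp add: full_obs_def append_slot_def Y1hist_Suc Y2hist_Suc Shist_Suc)
  have inj: "inj_on append_slot {(p, s, y). (bob_rec s \<or> calvin_rec s) \<or> y = None}"
    unfolding append_slot_def inj_on_def by (auto split: if_splits)
  have "dentropy model (full_obs (Suc m)) = dentropy model (full_obs m) + pmf_entropy (state_pmf d1 d2)
      + measure (state_pmf d1 d2) {s. bob_rec s \<or> calvin_rec s} * cond_dentropy model (Xv f (Suc m)) (full_obs m)"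
    by (rule dentropy_erasure_update[where R = "\<lambda>s. bob_rec s \<or> calvin_rec s",
          OF indep finite_obs(2) finite_set_state_pmf recode inj])
  then show ?thesis
    using state_pmf_receive_probabilities(1)[of d1 d2] d1 d2 by simp
qed

text \<open>Calvin's view receives the input exactly when Calvin does.\<close>
lemma dentropy_calvin_obs_Suc:
  assumes "m < n"
  shows "dentropy model (calvin_obs (Suc m)) = dentropy model (calvin_obs m) + pmf_entropy (state_pmf d1 d2)
           + (1 - d2) * cond_dentropy model (Xv f (Suc m)) (calvin_obs m)"
proof -
  define append_slot where "append_slot = (\<lambda>((y2 :: 'a list option list, ss :: chstate list, w :: 'a list),
       s :: chstate, y :: 'a list option). (y2 @ [y], ss @ [s], w))"
  have indep: "map_pmf (\<lambda>\<omega>. ((Xv f (Suc m) \<omega>, calvin_obs m \<omega>), next_state m \<omega>)) model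
      = pair_pmf (map_pmf (\<lambda>\<omega>. (Xv f (Suc m) \<omega>, calvin_obs m \<omega>)) model) (state_pmf d1 d2)"
    by (rule pair_pmf_through[OF converse_space_past_next[OF assms]]) (simp add: calvin_obs_def causal_past)
  have recode: "calvin_obs (Suc m) \<omega> = append_slot (calvin_obs m \<omega>, next_state m \<omega>,
      if calvin_rec (next_state m \<omega>) then Some (Xv f (Suc m) \<omega>) else None)"
    if "\<omega> \<in> set_pmf model" for \<omega>
    using set_pmf_converse_space(2)[OF that] assms
    by (simp add: calvin_obs_def append_slot_def Y2hist_Suc Shist_Suc)
  have inj: "inj_on append_slot {(p, s, y). calvin_rec s \<or> y = None}"
    unfolding append_slot_def inj_on_def by auto
  have "dentropy model (calvin_obs (Suc m)) = dentropy model (calvin_obs m) + pmf_entropy (state_pmf d1 d2)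
      + measure (state_pmf d1 d2) {s. calvin_rec s} * cond_dentropy model (Xv f (Suc m)) (calvin_obs m)"
    by (rule dentropy_erasure_update[where R = calvin_rec,
          OF indep finite_obs(3) finite_set_state_pmf recode inj])
  then show ?thesis
    using state_pmf_receive_probabilities(2)[of d1 d2] d1 d2 by simp
qed

text \<open>One slot changes the gap by \<open>\<delta>\<^sub>2(1-\<delta>\<^sub>1) H(X|Y\<^sub>1Y\<^sub>2SW\<^sub>1) - (1-\<delta>\<^sub>2) I(X;Y\<^sub>1|Y\<^sub>2SW\<^sub>1)\<close>,
  because \<open>I(X;Y\<^sub>1|Y\<^sub>2SW\<^sub>1) = H(X|Y\<^sub>2SW\<^sub>1) - H(X|Y\<^sub>1Y\<^sub>2SW\<^sub>1)\<close>.\<close>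
lemma gap_Suc:
  assumes "m < n"
  shows "gap (Suc m) = gap m + d2 * (1 - d1) * cond_dentropy model (Xv f (Suc m)) (full_obs m)
           - (1 - d2) * cond_dmi model (Xv f (Suc m)) (Y1hist f m) (calvin_obs m)"
proof -
  have "(\<lambda>\<omega>. (Y1hist f m \<omega>, calvin_obs m \<omega>)) = full_obs m"
    by (simp add: full_obs_def calvin_obs_def)
  then have "cond_dentropy model (Xv f (Suc m)) (calvin_obs m) =
      cond_dentropy model (Xv f (Suc m)) (full_obs m) + cond_dmi model (Xv f (Suc m)) (Y1hist f m) (calvin_obs m)"
    by (simp add: cond_dmi_def)
  then show ?thesis
    unfolding gap_def dentropy_full_obs_Suc[OF assms] dentropy_calvin_obs_Suc[OF assms]
    by (simp add: algebra_simps)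
qed

lemma gap_0: "gap 0 = 0"
proof -
  have "map_pmf (full_obs 0) model = map_pmf (Pair []) (map_pmf (calvin_obs 0) model)"
    by (simp add: map_pmf_comp full_obs_def calvin_obs_def Y1hist_def)
  moreover have "pmf_entropy (map_pmf (Pair []) (map_pmf (calvin_obs 0) model)) =
      pmf_entropy (map_pmf (calvin_obs 0) model)"
    by (rule pmf_entropy_map_inj) (auto simp: inj_on_def)
  ultimately show ?thesis by (simp add: gap_def dentropy_eq_pmf_entropy)
qed

text \<open>Calvin's view is a function of the full view, so the gap is never negative.\<close>
lemma gap_nonneg: "0 \<le> gap m"
proof -
  have "map_pmf (calvin_obs m) model = map_pmf snd (map_pmf (full_obs m) model)"
    by (simp add: map_pmf_comp full_obs_def calvin_obs_def)
  then show ?thesis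
    using pmf_entropy_map_le[OF finite_obs(1), of snd] by (simp add: gap_def dentropy_eq_pmf_entropy)
qed

lemma gap_telescope:
  assumes "k \<le> n"
  shows "gap k = d2 * (1 - d1) * (\<Sum>i=1..k. cond_dentropy model (Xv f i) (full_obs (i - 1)))
     - (1 - d2) * (\<Sum>i=1..k. cond_dmi model (Xv f i) (Y1hist f (i - 1)) (calvin_obs (i - 1)))"
  using assms
proof (induction k)
  case 0
  then show ?case by (simp add: gap_0)
next
  case (Suc k)
  then show ?case by (simp add: gap_Suc algebra_simps)
qed

end

theorem lemma6:
  fixes L N1 N2 n :: nat
    and th :: "'r pmf"
    and d1 d2 :: real
    and f :: "nat \<Rightarrow> 'a::{finite,field} list \<Rightarrow> 'a list \<Rightarrow> 'r \<Rightarrow> chstate list \<Rightarrow> 'a list"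
  assumes "0 < d1" "d1 < 1" "0 < d2" "d2 < 1"
    and "\<And>i w1 w2 t ss. length (f i w1 w2 t ss) = L"
  defines "M \<equiv> converse_space L N1 N2 th n d1 d2"
  shows "(\<Sum>i=1..n. cond_dentropy M (Xv f i)
            (\<lambda>\<omega>. (Y1hist f (i - 1) \<omega>, Y2hist f (i - 1) \<omega>, Shist (i - 1) \<omega>, W1v \<omega>)))
     \<ge> (1 - d2) / ((1 - d1) * d2) *
        (\<Sum>i=1..n. cond_dmi M (Xv f i) (Y1hist f (i - 1))
            (\<lambda>\<omega>. (Y2hist f (i - 1) \<omega>, Shist (i - 1) \<omega>, W1v \<omega>)))"
proof -
  interpret converse_setting L N1 N2 n th d1 d2 f
    using assms(1-5) by unfold_locales
  define H where "H = (\<Sum>i=1..n. cond_dentropy M (Xv f i) (full_obs (i - 1)))"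
  define I where "I = (\<Sum>i=1..n. cond_dmi M (Xv f i) (Y1hist f (i - 1)) (calvin_obs (i - 1)))"
  have "0 \<le> d2 * (1 - d1) * H - (1 - d2) * I"
    using gap_nonneg[of n] gap_telescope[of n] unfolding H_def I_def M_def by simp
  moreover have "0 < (1 - d1) * d2" using assms(1-4) by simp
  ultimately have "(1 - d2) / ((1 - d1) * d2) * I \<le> H"
    by (simp add: field_simps)
  then show ?thesis
    unfolding H_def I_def full_obs_def calvin_obs_def by simp
qed

end
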